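(* Let $k\ge3$ be odd and let $G$ be a connected $k$-uniform hypergraph (with at least one edge). Then $0$ is not an eigenvalue of the signless Laplacian tensor $\mathcal D+\mathcal A$ of $G$.
   Context: A $k$-uniform hypergraph $G=(V,E)$ has vertex set $V=[n]$ ($n\ge k$) and edge set $E$ of $k$-element subsets; $d_i$ is the number of edges containing $i$. $G$ is connected if any two distinct vertices are joined by a sequence of edges with consecutive edges intersecting. The adjacency tensor $\mathcal A$ has $a_{i_1\dots i_k}=\frac1{(k-1)!}$ if $\{i_1,\dots,i_k\}\in E$, else $0$; $\mathcal D$ is diagonal with $d_{i\dots i}=d_i$. $\lambda\in\mathbb C$ is an eigenvalue of a tensor $\mathcal T$ if there is $\mathbf x\in\mathbb C^n\setminus\{0\}$ with $\sum_{i_2,\dots,i_k}t_{ii_2\dots i_k}x_{i_2}\cdots x_{i_k}=\lambda x_i^{k-1}$ for all $i\in[n]$. *)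

theory Defs
  imports Complex_Main
begin

definition uniform_hypergraph :: "nat \<Rightarrow> nat \<Rightarrow> nat set set \<Rightarrow> bool" where
  "uniform_hypergraph n k E \<longleftrightarrow> n \<ge> k \<and> (\<forall>e\<in>E. e \<subseteq> {1..n} \<and> card e = k)"

definition hdegree :: "nat set set \<Rightarrow> nat \<Rightarrow> nat" where
  "hdegree E i = card {e\<in>E. i \<in> e}"

definition hconnected :: "nat \<Rightarrow> nat set set \<Rightarrow> bool" where
  "hconnected n E \<longleftrightarrow>
     (\<forall>i\<in>{1..n}. \<forall>j\<in>{1..n}. i \<noteq> j \<longrightarrow>
        (\<exists>es. es \<noteq> [] \<and> set es \<subseteq> E \<and> i \<in> hd es \<and> j \<in> last es \<and>
              (\<forall>t. Suc t < length es \<longrightarrow> es ! t \<inter> es ! Suc t \<noteq> {})))"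

text \<open>Order-k tensors of dimension n are functions on index lists (entries used only for
  lists of length k with entries in [n]).\<close>
type_synonym tensor = "nat list \<Rightarrow> complex"

definition adjacency_tensor :: "nat \<Rightarrow> nat set set \<Rightarrow> tensor" where
  "adjacency_tensor k E idx = (if set idx \<in> E then 1 / of_nat (fact (k - 1)) else 0)"

definition degree_tensor :: "nat set set \<Rightarrow> tensor" where
  "degree_tensor E idx = (if idx \<noteq> [] \<and> (\<forall>j\<in>set idx. j = hd idx)
                           then of_nat (hdegree E (hd idx)) else 0)"

definition signless_laplacian :: "nat \<Rightarrow> nat set set \<Rightarrow> tensor" where
  "signless_laplacian k E idx = degree_tensor E idx + adjacency_tensor k E idx"

definition tensor_eigenvalue :: "nat \<Rightarrow> nat \<Rightarrow> tensor \<Rightarrow> complex \<Rightarrow> bool" where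
  "tensor_eigenvalue n k T lam \<longleftrightarrow>
     (\<exists>x :: nat \<Rightarrow> complex. (\<exists>i\<in>{1..n}. x i \<noteq> 0) \<and>
        (\<forall>i\<in>{1..n}.
           (\<Sum>js\<in>{js. length js = k - 1 \<and> set js \<subseteq> {1..n}}.
               T (i # js) * prod_list (map x js)) = lam * x i ^ (k - 1)))"

end

theory Submission
  imports Defs "HOL-Combinatorics.Multiset_Permutations"
begin

text \<open>
  Write \<open>x\<^bsup>S\<^esup>\<close> for the product of the \<open>x\<^sub>l\<close>, \<open>l \<in> S\<close>. Grouping the \<open>(k-1)!\<close> orderings of
  each edge, the eigen-equation for the eigenvalue 0 at a vertex \<open>i\<close> becomes
  \<open>d\<^sub>i x\<^sub>i\<^bsup>k-1\<^esup> + (\<Sum>e \<ni> i. x\<^bsup>e-{i}\<^esup>) = 0\<close>.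
  At a vertex \<open>i\<close> of maximal modulus \<open>M > 0\<close>, the \<open>d\<^sub>i\<close> products \<open>x\<^bsup>e-{i}\<^esup>\<close> have modulus at
  most \<open>M\<^bsup>k-1\<^esup>\<close> but sum to \<open>-d\<^sub>i x\<^sub>i\<^bsup>k-1\<^esup>\<close>, so all of them equal \<open>-x\<^sub>i\<^bsup>k-1\<^esup>\<close> and every
  vertex of an edge through \<open>i\<close> has modulus \<open>M\<close> as well. Connectedness supplies such an
  edge \<open>e\<close>; the same argument at each \<open>l \<in> e\<close> gives \<open>x\<^sub>l\<^bsup>k\<^esup> = -x\<^bsup>e\<^esup>\<close>, and multiplying
  over \<open>e\<close> yields \<open>(x\<^bsup>e\<^esup>)\<^bsup>k\<^esup> = (-x\<^bsup>e\<^esup>)\<^bsup>k\<^esup> = -(x\<^bsup>e\<^esup>)\<^bsup>k\<^esup>\<close> because \<open>k\<close> is odd. Hence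
  \<open>x\<^bsup>e\<^esup> = 0\<close>, although none of its factors vanishes.
\<close>

lemma sum_eq_card_mult_imp_all_eq:
  fixes z :: "'a \<Rightarrow> complex"
  assumes "finite A" and le: "\<And>a. a \<in> A \<Longrightarrow> norm (z a) \<le> norm w"
    and sum: "(\<Sum>a\<in>A. z a) = of_nat (card A) * w"
  shows "\<forall>a\<in>A. z a = w"
proof (cases "w = 0")
  case True
  then show ?thesis using le by auto
next
  case False
  define R where "R = (norm w)\<^sup>2"
  \<comment> \<open>After rotating by \<open>cnj w\<close>, each real part \<open>Re (z a * cnj w)\<close> is at most \<open>R\<close> while
    they sum to \<open>card A * R\<close>; so all equal \<open>R\<close>, which forces \<open>z a * cnj w = R\<close>.\<close>
  have w_cnj: "w * cnj w = of_real R"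
    unfolding R_def by (rule complex_norm_square[symmetric])
  have norm_le: "norm (z a * cnj w) \<le> R" if "a \<in> A" for a
    using le[OF that] by (simp add: norm_mult R_def power2_eq_square mult_right_mono)
  have "(\<Sum>a\<in>A. z a * cnj w) = of_real (real (card A) * R)"
    by (simp add: sum_distrib_right[symmetric] sum w_cnj mult.assoc)
  from arg_cong[OF this, of Re] have "(\<Sum>a\<in>A. Re (z a * cnj w)) = real (card A) * R"
    by (simp only: Re_sum Re_complex_of_real)
  then have sum0: "(\<Sum>a\<in>A. R - Re (z a * cnj w)) = 0"
    by (simp add: sum_subtractf)
  have nonneg: "0 \<le> R - Re (z a * cnj w)" if "a \<in> A" for a
    using complex_Re_le_cmod[of "z a * cnj w"] norm_le[OF that] by linarith
  have Re_eq: "Re (z a * cnj w) = R" if "a \<in> A" for a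
    using sum_nonneg_eq_0_iff[OF \<open>finite A\<close> nonneg] sum0 that by simp
  have "z a * cnj w = w * cnj w" if "a \<in> A" for a
  proof -
    have "(norm (z a * cnj w))\<^sup>2 \<le> R\<^sup>2"
      by (rule power_mono[OF norm_le[OF that] norm_ge_zero])
    then have "Im (z a * cnj w) = 0"
      using Re_eq[OF that] cmod_power2[of "z a * cnj w"] by simp
    then show ?thesis using Re_eq[OF that] w_cnj by (simp add: complex_eq_iff)
  qed
  then show ?thesis using False by simp
qed

lemma prod_eq_power_imp_all_eq:
  fixes f :: "'a \<Rightarrow> real"
  assumes "finite S" and "M > 0" and bounds: "\<And>l. l \<in> S \<Longrightarrow> 0 \<le> f l \<and> f l \<le> M"
    and "prod f S = M ^ card S"
  shows "\<forall>l\<in>S. f l = M"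
proof
  fix l assume "l \<in> S"
  have "M * M ^ card (S - {l}) = M ^ card S"
    using \<open>finite S\<close> \<open>l \<in> S\<close> by (metis card_Suc_Diff1 power_Suc)
  also have "\<dots> = f l * prod f (S - {l})"
    unfolding assms(4)[symmetric] by (rule prod.remove[OF \<open>finite S\<close> \<open>l \<in> S\<close>])
  also have "\<dots> \<le> f l * (\<Prod>_\<in>S - {l}. M)"
    using bounds \<open>l \<in> S\<close> by (intro mult_left_mono prod_mono) auto
  finally have "M \<le> f l" using \<open>M > 0\<close> by simp
  then show "f l = M" using bounds \<open>l \<in> S\<close> by (simp add: order_antisym)
qed

lemma prod_eq_zero_if_odd_powers:
  fixes x :: "'a \<Rightarrow> 'b :: {idom, ring_char_0}"
  assumes "finite e" and "odd (card e)" and powers: "\<And>l. l \<in> e \<Longrightarrow> x l ^ card e = - prod x e"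
  shows "prod x e = 0"
proof -
  have "prod x e ^ card e = (\<Prod>l\<in>e. x l ^ card e)" by (rule prod_power_distrib)
  also have "\<dots> = (- prod x e) ^ card e" using powers by simp
  also have "\<dots> = - (prod x e ^ card e)" using \<open>odd (card e)\<close> by (simp add: power_minus_odd)
  finally show ?thesis by simp
qed

lemma ex_max_if_finite:
  fixes f :: "'a \<Rightarrow> 'b :: linorder"
  assumes "finite S" and "S \<noteq> {}"
  shows "\<exists>i\<in>S. \<forall>j\<in>S. f j \<le> f i"
proof -
  have "Max (f ` S) \<in> f ` S" using assms by simp
  then obtain i where "i \<in> S" and i_max: "Max (f ` S) = f i" by blast
  have "f j \<le> f i" if "j \<in> S" for j
    unfolding i_max[symmetric] using assms that by simp
  with \<open>i \<in> S\<close> show ?thesis by blast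
qed

lemma uniform_hypergraph_edgeD:
  assumes "uniform_hypergraph n k E" and "e \<in> E"
  shows "finite e" and "card e = k" and "e \<subseteq> {1..n}"
  using assms finite_subset[of e "{1..n}"] by (auto simp: uniform_hypergraph_def)

lemma finite_uniform_hypergraph:
  assumes "uniform_hypergraph n k E"
  shows "finite E"
  using assms by (intro finite_subset[of E "Pow {1..n}"]) (auto simp: uniform_hypergraph_def)

lemma hconnected_imp_vertex_in_edge:
  assumes "hconnected n E" and "2 \<le> n" and "i \<in> {1..n}"
  shows "\<exists>e\<in>E. i \<in> e"
proof -
  define j :: nat where "j = (if i = 1 then 2 else 1)"
  have "j \<in> {1..n}" "i \<noteq> j" using assms(2,3) by (auto simp: j_def)
  then obtain es where "es \<noteq> []" "set es \<subseteq> E" "i \<in> hd es"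
    using assms(1,3) unfolding hconnected_def by blast
  then show ?thesis by (metis hd_in_set subsetD)
qed

lemma degree_tensor_contraction:
  fixes x :: "nat \<Rightarrow> complex"
  assumes "i \<in> {1..n}"
  shows "(\<Sum>js\<in>{js. length js = m \<and> set js \<subseteq> {1..n}}. degree_tensor E (i # js) * prod_list (map x js))
    = of_nat (hdegree E i) * x i ^ m"
proof -
  let ?L = "{js. length js = m \<and> set js \<subseteq> {1..n}}"
  have "finite ?L" using finite_lists_length_eq[of "{1..n}" m] by (simp add: conj_commute)
  have "(\<Sum>js\<in>?L. degree_tensor E (i # js) * prod_list (map x js))
      = (\<Sum>js\<in>?L. if \<forall>j\<in>set js. j = i then of_nat (hdegree E i) * prod_list (map x js) else 0)"
    by (rule sum.cong) (auto simp: degree_tensor_def)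
  also have "\<dots> = (\<Sum>js\<in>{js\<in>?L. \<forall>j\<in>set js. j = i}. of_nat (hdegree E i) * prod_list (map x js))"
    by (rule sum.inter_filter[OF \<open>finite ?L\<close>, symmetric])
  also have "{js\<in>?L. \<forall>j\<in>set js. j = i} = {replicate m i}"
    using assms by (auto simp: replicate_length_same)
  finally show ?thesis by (simp add: map_replicate_const)
qed

lemma edge_lists_through_vertex:
  assumes "uniform_hypergraph n k E"
  shows "{js. length js = k - 1 \<and> set js \<subseteq> {1..n} \<and> set (i # js) \<in> E}
    = (\<Union>e\<in>{e\<in>E. i \<in> e}. permutations_of_set (e - {i}))"
proof (intro equalityI subsetI)
  fix js assume "js \<in> {js. length js = k - 1 \<and> set js \<subseteq> {1..n} \<and> set (i # js) \<in> E}"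
  then have len: "length js = k - 1" and edge: "set (i # js) \<in> E" by auto
  have "card (set (i # js)) = k" using uniform_hypergraph_edgeD(2)[OF assms edge] .
  moreover have "card (set (i # js)) \<noteq> 0" by simp
  ultimately have "card (set (i # js)) = length (i # js)" using len by simp
  then have "distinct (i # js)" by (rule card_distinct)
  then have "js \<in> permutations_of_set (set (i # js) - {i})" by auto
  then show "js \<in> (\<Union>e\<in>{e\<in>E. i \<in> e}. permutations_of_set (e - {i}))" using edge by auto
next
  fix js assume "js \<in> (\<Union>e\<in>{e\<in>E. i \<in> e}. permutations_of_set (e - {i}))"
  then obtain e where e: "e \<in> E" "i \<in> e" and js: "js \<in> permutations_of_set (e - {i})" by auto
  note edge = uniform_hypergraph_edgeD[OF assms e(1)]
  have "length js = card (e - {i})" using length_finite_permutations_of_set[OF js] .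
  then have "length js = k - 1" using edge e(2) by simp
  moreover have "set (i # js) = e" using permutations_of_setD(1)[OF js] e(2) by auto
  ultimately show "js \<in> {js. length js = k - 1 \<and> set js \<subseteq> {1..n} \<and> set (i # js) \<in> E}"
    using edge e by auto
qed

lemma adjacency_tensor_contraction:
  fixes x :: "nat \<Rightarrow> complex"
  assumes U: "uniform_hypergraph n k E"
  shows "(\<Sum>js\<in>{js. length js = k - 1 \<and> set js \<subseteq> {1..n}}. adjacency_tensor k E (i # js) * prod_list (map x js))
    = (\<Sum>e\<in>{e\<in>E. i \<in> e}. prod x (e - {i}))"
proof -
  let ?L = "{js. length js = k - 1 \<and> set js \<subseteq> {1..n}}"
  let ?P = "\<lambda>e. permutations_of_set (e - {i})"
  have "finite ?L" using finite_lists_length_eq[of "{1..n}" "k - 1"] by (simp add: conj_commute)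
  have "(\<Sum>js\<in>?L. adjacency_tensor k E (i # js) * prod_list (map x js))
      = (\<Sum>js\<in>?L. if set (i # js) \<in> E then prod_list (map x js) / of_nat (fact (k - 1)) else 0)"
    by (rule sum.cong) (auto simp: adjacency_tensor_def)
  also have "\<dots> = (\<Sum>js\<in>{js\<in>?L. set (i # js) \<in> E}. prod_list (map x js)) / of_nat (fact (k - 1))"
    unfolding sum.inter_filter[OF \<open>finite ?L\<close>, symmetric] sum_divide_distrib ..
  also have "{js\<in>?L. set (i # js) \<in> E} = (\<Union>e\<in>{e\<in>E. i \<in> e}. ?P e)"
    using edge_lists_through_vertex[OF U] by auto
  also have "(\<Sum>js\<in>(\<Union>e\<in>{e\<in>E. i \<in> e}. ?P e). prod_list (map x js))
      = (\<Sum>e\<in>{e\<in>E. i \<in> e}. \<Sum>js\<in>?P e. prod_list (map x js))"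
    using finite_uniform_hypergraph[OF U]
    by (intro sum.UNION_disjoint) (auto dest: permutations_of_setD)
  also have "\<dots> = (\<Sum>e\<in>{e\<in>E. i \<in> e}. of_nat (fact (k - 1)) * prod x (e - {i}))"
  proof (rule sum.cong)
    fix e assume "e \<in> {e\<in>E. i \<in> e}"
    then have e: "e \<in> E" "i \<in> e" by auto
    note edge = uniform_hypergraph_edgeD[OF U e(1)]
    have "(\<Sum>js\<in>?P e. prod_list (map x js)) = (\<Sum>js\<in>?P e. prod x (e - {i}))"
      by (intro sum.cong) (metis permutations_of_setD prod.distinct_set_conv_list)+
    then show "(\<Sum>js\<in>?P e. prod_list (map x js)) = of_nat (fact (k - 1)) * prod x (e - {i})"
      using edge e(2) by simp
  qed simp
  finally show ?thesis by (simp add: sum_distrib_left[symmetric])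
qed

lemma signless_laplacian_contraction:
  fixes x :: "nat \<Rightarrow> complex"
  assumes "uniform_hypergraph n k E" and "i \<in> {1..n}"
  shows "(\<Sum>js\<in>{js. length js = k - 1 \<and> set js \<subseteq> {1..n}}. signless_laplacian k E (i # js) * prod_list (map x js))
    = of_nat (hdegree E i) * x i ^ (k - 1) + (\<Sum>e\<in>{e\<in>E. i \<in> e}. prod x (e - {i}))"
  unfolding signless_laplacian_def distrib_right sum.distrib
    degree_tensor_contraction[OF assms(2)] adjacency_tensor_contraction[OF assms(1)] ..

lemma maximal_modulus_propagates:
  fixes x :: "nat \<Rightarrow> complex"
  assumes U: "uniform_hypergraph n k E" and "i \<in> {1..n}" and "x i \<noteq> 0"
    and max: "\<And>j. j \<in> {1..n} \<Longrightarrow> norm (x j) \<le> norm (x i)"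
    and eq: "of_nat (hdegree E i) * x i ^ (k - 1) + (\<Sum>e\<in>{e\<in>E. i \<in> e}. prod x (e - {i})) = 0"
    and "e \<in> E" and "i \<in> e"
  shows "prod x (e - {i}) = - (x i ^ (k - 1))" and "\<forall>l\<in>e. norm (x l) = norm (x i)"
proof -
  have bound: "prod (\<lambda>l. norm (x l)) (f - {i}) \<le> norm (- (x i ^ (k - 1)))"
    if "f \<in> {f\<in>E. i \<in> f}" for f
  proof -
    note edge = uniform_hypergraph_edgeD[OF U, of f]
    have "prod (\<lambda>l. norm (x l)) (f - {i}) \<le> (\<Prod>_\<in>f - {i}. norm (x i))"
      using max edge(3) that by (intro prod_mono) auto
    then show ?thesis using edge that by (simp add: norm_power)
  qed
  have "(\<Sum>f\<in>{f\<in>E. i \<in> f}. prod x (f - {i}))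
      = of_nat (card {f\<in>E. i \<in> f}) * (- (x i ^ (k - 1)))"
    using eq by (simp add: hdegree_def add_eq_0_iff)
  then have "\<forall>f\<in>{f\<in>E. i \<in> f}. prod x (f - {i}) = - (x i ^ (k - 1))"
    using finite_uniform_hypergraph[OF U] bound
    by (intro sum_eq_card_mult_imp_all_eq) (auto simp: prod_norm)
  then show prod_eq: "prod x (e - {i}) = - (x i ^ (k - 1))" using \<open>e \<in> E\<close> \<open>i \<in> e\<close> by simp
  note edge = uniform_hypergraph_edgeD[OF U \<open>e \<in> E\<close>]
  have "prod (\<lambda>l. norm (x l)) (e - {i}) = norm (x i) ^ card (e - {i})"
    using edge \<open>i \<in> e\<close> by (simp add: prod_norm prod_eq norm_power)
  then have "\<forall>l\<in>e - {i}. norm (x l) = norm (x i)"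
    using edge max \<open>x i \<noteq> 0\<close> by (intro prod_eq_power_imp_all_eq) auto
  then show "\<forall>l\<in>e. norm (x l) = norm (x i)" by blast
qed

lemma zero_eigenvector_edge_powers:
  fixes x :: "nat \<Rightarrow> complex"
  assumes U: "uniform_hypergraph n k E" and "k \<ge> 1" and "i \<in> {1..n}" and "x i \<noteq> 0"
    and max: "\<And>j. j \<in> {1..n} \<Longrightarrow> norm (x j) \<le> norm (x i)"
    and eq: "\<And>j. j \<in> {1..n} \<Longrightarrow>
      of_nat (hdegree E j) * x j ^ (k - 1) + (\<Sum>e\<in>{e\<in>E. j \<in> e}. prod x (e - {j})) = 0"
    and "e \<in> E" and "i \<in> e"
  shows "\<forall>l\<in>e. x l \<noteq> 0 \<and> x l ^ k = - prod x e"
proof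
  fix l assume "l \<in> e"
  note edge = uniform_hypergraph_edgeD[OF U \<open>e \<in> E\<close>]
  have same_modulus: "\<forall>l\<in>e. norm (x l) = norm (x i)"
    using maximal_modulus_propagates(2)[OF U \<open>i \<in> {1..n}\<close> \<open>x i \<noteq> 0\<close> max
        eq[OF \<open>i \<in> {1..n}\<close>] \<open>e \<in> E\<close> \<open>i \<in> e\<close>] .
  have l: "l \<in> {1..n}" "x l \<noteq> 0" using \<open>l \<in> e\<close> edge same_modulus \<open>x i \<noteq> 0\<close> by auto
  have "norm (x j) \<le> norm (x l)" if "j \<in> {1..n}" for j
    using max[OF that] same_modulus \<open>l \<in> e\<close> by simp
  from maximal_modulus_propagates(1)[OF U l this eq[OF l(1)] \<open>e \<in> E\<close> \<open>l \<in> e\<close>]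
  have "prod x (e - {l}) = - (x l ^ (k - 1))" .
  moreover have "x l ^ k = x l * x l ^ (k - 1)" using \<open>k \<ge> 1\<close> by (cases k) simp_all
  ultimately show "x l \<noteq> 0 \<and> x l ^ k = - prod x e"
    using l(2) by (simp add: prod.remove[OF edge(1) \<open>l \<in> e\<close>])
qed

theorem proposition4p1:
  fixes n k :: nat and E :: "nat set set"
  assumes "odd k" and "k \<ge> 3"
    and "uniform_hypergraph n k E"
    and "hconnected n E"
    and "E \<noteq> {}"
  shows "\<not> tensor_eigenvalue n k (signless_laplacian k E) 0"
proof
  assume "tensor_eigenvalue n k (signless_laplacian k E) 0"
  then obtain x :: "nat \<Rightarrow> complex" where "\<exists>i\<in>{1..n}. x i \<noteq> 0" and
    "\<forall>i\<in>{1..n}. (\<Sum>js\<in>{js. length js = k - 1 \<and> set js \<subseteq> {1..n}}.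
       signless_laplacian k E (i # js) * prod_list (map x js)) = 0 * x i ^ (k - 1)"
    unfolding tensor_eigenvalue_def by blast
  then have eq: "\<And>i. i \<in> {1..n} \<Longrightarrow>
      of_nat (hdegree E i) * x i ^ (k - 1) + (\<Sum>e\<in>{e\<in>E. i \<in> e}. prod x (e - {i})) = 0"
    using signless_laplacian_contraction[OF assms(3)] by simp
  have "2 \<le> n" using assms(2,3) by (simp add: uniform_hypergraph_def)
  obtain i where i: "i \<in> {1..n}" and max: "\<And>j. j \<in> {1..n} \<Longrightarrow> norm (x j) \<le> norm (x i)"
    using ex_max_if_finite[of "{1..n}" "\<lambda>j. norm (x j)"] \<open>2 \<le> n\<close> by auto
  then have "x i \<noteq> 0" using \<open>\<exists>i\<in>{1..n}. x i \<noteq> 0\<close> by force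
  obtain e where "e \<in> E" "i \<in> e" using hconnected_imp_vertex_in_edge[OF assms(4) \<open>2 \<le> n\<close> i] ..
  note edge = uniform_hypergraph_edgeD[OF assms(3) \<open>e \<in> E\<close>]
  have powers: "\<forall>l\<in>e. x l \<noteq> 0 \<and> x l ^ k = - prod x e"
    using zero_eigenvector_edge_powers[OF assms(3) _ i \<open>x i \<noteq> 0\<close> max eq \<open>e \<in> E\<close> \<open>i \<in> e\<close>]
      \<open>k \<ge> 3\<close> by simp
  then have "prod x e = 0" using edge \<open>odd k\<close> by (intro prod_eq_zero_if_odd_powers) auto
  then show False using edge(1) powers by simp
qed

end
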